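(* Let $(R,+,\cdot)$ be a finite simple additively idempotent semiring with $|R|>2$ and let $(M,+)$ be a finite idempotent sub-irreducible $R$-semimodule. Then: (1) if $\infty_R x\ne\infty_M$ for some $x\in M$, then $(M,+)$ has a neutral element $0_M$, $x=0_M$, and $R0_M=\{0_M\}$; (2) $\infty_R$ is right absorbing if and only if $R\infty_M=\{\infty_M\}$; (3) if $\infty_R$ is not left absorbing then $(M,+)$ has a neutral element $0_M$ and $R0_M=\{0_M\}$; (4) if $\infty_R$ is left absorbing, $(M,+)$ is quotient-irreducible, $|M|>2$, and $(M,+)$ has a neutral element $0_M$, then $R0_M=M$.
   Context: A semiring is a nonempty set with a commutative semigroup operation $+$ and a semigroup operation $\cdot$ satisfying both distributive laws; simple if its only congruences are the identity and the full relation; additively idempotent if $r+r=r$, with order $x\le y:\Leftrightarrow x+y=y$ and greatest element $\infty_R=\sum_{r\in R}r$. An element $r$ is right absorbing if $sr=r$ for all $s\in R$, left absorbing if $rs=r$ for all $s$. An $R$-semimodule is a commutative semigroup $(M,+)$ with an action $R\times M\to M$ satisfying $r(sx)=(rs)x$, $(r+s)x=rx+sx$, $r(x+y)=rx+ry$; idempotent if $x+x=x$, with order defined likewise and greatest element $\infty_M$. $Rx=\{rx:r\in R\}$. A subsemimodule is a subsemigroup closed under the action; a semimodule congruence is an equivalence compatible with $+$ and the action. $M$ is quasitrivial if $rx=sx$ for all $r,s,x$; id-quasitrivial if $rx=x$ for all $r,x$; sub-irreducible if not quasitrivial and all proper subsemimodules are id-quasitrivial; quotient-irreducible if not quasitrivial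 and its only congruences are the identity and $M\times M$. *)

theory Defs
  imports Main
begin

text \<open>Semirings are modelled by the type class semiring (commutative semigroup +,
  semigroup *, both distributive laws; no zero or one required), with the whole
  type as carrier.\<close>

definition semiring_cong :: "('r::semiring \<times> 'r) set \<Rightarrow> bool" where
  "semiring_cong E \<longleftrightarrow> equiv UNIV E \<and>
     (\<forall>a b c d. (a, b) \<in> E \<and> (c, d) \<in> E \<longrightarrow> (a + c, b + d) \<in> E \<and> (a * c, b * d) \<in> E)"

definition simple_semiring :: "'r::semiring itself \<Rightarrow> bool" where
  "simple_semiring _ \<longleftrightarrow> (\<forall>E :: ('r \<times> 'r) set. semiring_cong E \<longrightarrow> E = Id \<or> E = UNIV)"

definition add_idem :: "'a::ab_semigroup_add itself \<Rightarrow> bool" where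
  "add_idem _ \<longleftrightarrow> (\<forall>x :: 'a. x + x = x)"

text \<open>Greatest element of a finite additively idempotent structure: the sum of
  all elements (a fold of + over the whole finite carrier, starting from an element
  of the carrier; by idempotency this is exactly the sum of all elements).\<close>
definition infty :: "'a::ab_semigroup_add" where
  "infty = Finite_Set.fold (+) (SOME x. True) (UNIV :: 'a set)"

definition semimodule :: "('r::semiring \<Rightarrow> 'm::ab_semigroup_add \<Rightarrow> 'm) \<Rightarrow> bool" where
  "semimodule act \<longleftrightarrow>
     (\<forall>r s x. act r (act s x) = act (r * s) x) \<and>
     (\<forall>r s x. act (r + s) x = act r x + act s x) \<and>
     (\<forall>r x y. act r (x + y) = act r x + act r y)"

definition subsemimodule :: "('r::semiring \<Rightarrow> 'm::ab_semigroup_add \<Rightarrow> 'm) \<Rightarrow> 'm set \<Rightarrow> bool" where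
  "subsemimodule act N \<longleftrightarrow> N \<noteq> {} \<and> (\<forall>x\<in>N. \<forall>y\<in>N. x + y \<in> N) \<and> (\<forall>r. \<forall>x\<in>N. act r x \<in> N)"

definition semimodule_cong :: "('r::semiring \<Rightarrow> 'm::ab_semigroup_add \<Rightarrow> 'm) \<Rightarrow> ('m \<times> 'm) set \<Rightarrow> bool" where
  "semimodule_cong act E \<longleftrightarrow> equiv UNIV E \<and>
     (\<forall>a b c d. (a, b) \<in> E \<and> (c, d) \<in> E \<longrightarrow> (a + c, b + d) \<in> E) \<and>
     (\<forall>r a b. (a, b) \<in> E \<longrightarrow> (act r a, act r b) \<in> E)"

definition quasitrivial :: "('r::semiring \<Rightarrow> 'm::ab_semigroup_add \<Rightarrow> 'm) \<Rightarrow> bool" where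
  "quasitrivial act \<longleftrightarrow> (\<forall>r s x. act r x = act s x)"

definition id_quasitrivial_on :: "('r::semiring \<Rightarrow> 'm::ab_semigroup_add \<Rightarrow> 'm) \<Rightarrow> 'm set \<Rightarrow> bool" where
  "id_quasitrivial_on act N \<longleftrightarrow> (\<forall>r. \<forall>x\<in>N. act r x = x)"

definition sub_irreducible :: "('r::semiring \<Rightarrow> 'm::ab_semigroup_add \<Rightarrow> 'm) \<Rightarrow> bool" where
  "sub_irreducible act \<longleftrightarrow> \<not> quasitrivial act \<and>
     (\<forall>N. subsemimodule act N \<and> N \<noteq> UNIV \<longrightarrow> id_quasitrivial_on act N)"

definition quotient_irreducible :: "('r::semiring \<Rightarrow> 'm::ab_semigroup_add \<Rightarrow> 'm) \<Rightarrow> bool" where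
  "quotient_irreducible act \<longleftrightarrow> \<not> quasitrivial act \<and>
     (\<forall>E. semimodule_cong act E \<longrightarrow> E = Id \<or> E = UNIV)"

definition additive_neutral :: "'m::ab_semigroup_add \<Rightarrow> bool" where
  "additive_neutral z \<longleftrightarrow> (\<forall>x. x + z = x)"

end

theory Submission
  imports Defs
begin

text \<open>The action is faithful, since its kernel is a semiring congruence and the semiring is
  simple; and the multiplication of a simple idempotent semiring with more than two elements
  is not the right projection. Hence there is a point y with \<open>\<infinity>\<^sub>R y = \<infinity>\<^sub>M\<close> that is
  moved by some element. Sub-irreducibility makes every proper subsemimodule pointwise fixed,
  and all four statements follow by exhibiting suitable subsemimodules (down-sets of
  \<open>\<infinity>\<^sub>R x\<close>, up-sets of x, orbits Ry) and congruences (kernels of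
  \<open>r \<mapsto> r z\<close> and \<open>x \<mapsto> \<infinity>\<^sub>R x\<close>), whose properness is witnessed by y.\<close>

lemma add_infty:
  assumes "add_idem TYPE('a::{ab_semigroup_add,finite})"
  shows "y + (infty::'a) = infty"
proof -
  have idem: "\<And>u::'a. u + u = u" using assms unfolding add_idem_def by blast
  interpret comp_fun_idem "(+) :: 'a \<Rightarrow> 'a \<Rightarrow> 'a"
    by unfold_locales (auto simp: fun_eq_iff add.left_commute add.assoc[symmetric] idem)
  have "Finite_Set.fold (+) (SOME x. True) (insert y (UNIV::'a set))
        = y + Finite_Set.fold (+) (SOME x. True) (UNIV::'a set)"
    by (rule fold_insert_idem) simp
  then show ?thesis unfolding infty_def by simp
qed

lemma infty_add:
  assumes "add_idem TYPE('a::{ab_semigroup_add,finite})"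
  shows "(infty::'a) + y = infty"
  by (metis add_infty[OF assms] add.commute)

lemma add_idem_add_le_iff:
  assumes "add_idem TYPE('a::ab_semigroup_add)"
  shows "((a::'a) + b + c = c) \<longleftrightarrow> a + c = c \<and> b + c = c"
proof -
  have idem: "\<And>u::'a. u + u = u" using assms unfolding add_idem_def by blast
  have "a + (a + b + c) = a + b + c" "b + (a + b + c) = a + b + c"
    by (metis add.assoc add.commute idem)+
  then show ?thesis by (metis add.assoc)
qed

lemma equiv_kernel: "equiv UNIV {(a, b). f a = f b}"
  by (auto simp: equiv_def refl_on_def sym_def trans_def)

lemma simple_semiring_kernel_cases:
  fixes f :: "'r::semiring \<Rightarrow> 'b"
  assumes "simple_semiring TYPE('r)"
    and "\<And>a b c d. f a = f b \<Longrightarrow> f c = f d \<Longrightarrow> f (a + c) = f (b + d) \<and> f (a * c) = f (b * d)"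
  shows "inj f \<or> (\<forall>a b. f a = f b)"
proof -
  have "semiring_cong {(a, b). f a = f b}"
    using assms(2) equiv_kernel unfolding semiring_cong_def by blast
  then have "{(a, b). f a = f b} = Id \<or> {(a, b). f a = f b} = UNIV"
    using assms(1) unfolding simple_semiring_def by blast
  then show ?thesis by (auto simp: inj_def set_eq_iff)
qed

lemma exists_distinct_same_bool:
  fixes P :: "'a::finite \<Rightarrow> bool"
  assumes "card (UNIV :: 'a set) > 2"
  shows "\<exists>a b. a \<noteq> b \<and> P a = P b"
proof (rule ccontr)
  assume "\<not> ?thesis"
  then have "inj P" by (auto simp: inj_def)
  then have "card (UNIV :: 'a set) \<le> card (UNIV :: bool set)"
    by (rule card_inj_on_le) auto
  with assms show False by simp
qed

text \<open>If r * s = s always, then \<open>a \<sim> b \<longleftrightarrow> (a \<le> c \<longleftrightarrow> b \<le> c)\<close> is a congruence for any c;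
  for \<open>c \<noteq> \<infinity>\<close> it is proper, and with more than two elements it is not the identity.\<close>
lemma exists_mult_neq_right:
  assumes simple: "simple_semiring TYPE('r::{semiring,finite})"
    and idem: "add_idem TYPE('r)"
    and card: "card (UNIV :: 'r set) > 2"
  shows "\<exists>r s::'r. r * s \<noteq> s"
proof (rule ccontr)
  assume "\<not> ?thesis"
  then have right_proj: "\<And>r s::'r. r * s = s" by blast
  obtain c :: 'r where c: "c \<noteq> infty"
  proof -
    have "(UNIV :: 'r set) \<noteq> {infty}"
    proof
      assume "(UNIV :: 'r set) = {infty}"
      then have "card (UNIV :: 'r set) = card {infty :: 'r}" by (rule arg_cong)
      with card show False by simp
    qed
    then show ?thesis using that by blast
  qed
  let ?f = "\<lambda>a::'r. a + c = c"
  have "inj ?f \<or> (\<forall>a b. ?f a = ?f b)"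
  proof (rule simple_semiring_kernel_cases[OF simple])
    fix a b c' d :: 'r
    assume "?f a = ?f b" "?f c' = ?f d"
    then show "?f (a + c') = ?f (b + d) \<and> ?f (a * c') = ?f (b * d)"
      unfolding add_idem_add_le_iff[OF idem] right_proj by argo
  qed
  moreover have "\<not> inj ?f"
    using exists_distinct_same_bool[OF card, of ?f] by (auto simp: inj_def)
  ultimately have const: "\<forall>a b. ?f a = ?f b" by blast
  have "c + c = c" using idem unfolding add_idem_def by blast
  with const have "infty + c = c" by blast
  moreover have "infty + c = infty" by (rule infty_add[OF idem])
  ultimately show False using c by metis
qed

lemma act_inj:
  assumes "simple_semiring TYPE('r::semiring)"
    and "semimodule (act :: 'r \<Rightarrow> 'm::ab_semigroup_add \<Rightarrow> 'm)"
    and "\<not> quasitrivial act"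
  shows "inj act"
proof -
  have "inj act \<or> (\<forall>a b. act a = act b)"
  proof (rule simple_semiring_kernel_cases[OF assms(1)])
    fix a b c d
    assume "act a = act b" "act c = act d"
    then show "act (a + c) = act (b + d) \<and> act (a * c) = act (b * d)"
      using assms(2) unfolding semimodule_def by (metis ext)
  qed
  with assms(3) show ?thesis unfolding quasitrivial_def by metis
qed

locale idem_semimodule =
  fixes act :: "'r::{semiring,finite} \<Rightarrow> 'm::{ab_semigroup_add,finite} \<Rightarrow> 'm"
  assumes semimodule: "semimodule act"
    and idem_R: "add_idem TYPE('r)"
    and idem_M: "add_idem TYPE('m)"
begin

lemma act_act: "act r (act s x) = act (r * s) x"
  and act_add_left: "act (r + s) x = act r x + act s x"
  and act_add_right: "act r (x + y) = act r x + act r y"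
  using semimodule unfolding semimodule_def by blast+

lemma add_idem_M [simp]: "(x::'m) + x = x"
  using idem_M unfolding add_idem_def by blast

lemma add_infty_M [simp]: "x + (infty::'m) = infty" "(infty::'m) + x = infty"
  using add_infty[OF idem_M] infty_add[OF idem_M] .

lemma add_infty_R [simp]: "r + (infty::'r) = infty"
  using add_infty[OF idem_R] .

lemma act_infty_eq_infty_if_act_eq_infty:
  assumes "act r y = infty"
  shows "act (infty::'r) y = infty"
  using act_add_left[of r infty y] assms by simp

lemma act_infty_mult_le: "act ((infty::'r) * r) y + act infty y = act infty y"
  using act_add_left[of "infty * r" infty y] by simp

lemma subsemimoduleI:
  assumes "x \<in> N"
    and "\<And>y w. y \<in> N \<Longrightarrow> w \<in> N \<Longrightarrow> y + w \<in> N"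
    and "\<And>r y. y \<in> N \<Longrightarrow> act r y \<in> N"
  shows "subsemimodule act N"
  using assms unfolding subsemimodule_def by blast

lemma orbit_subsemimodule: "subsemimodule act (range (\<lambda>r. act r y))"
  unfolding subsemimodule_def by (auto simp: act_add_left[symmetric] act_act)

end

locale sub_irreducible_semimodule = idem_semimodule act
  for act :: "'r::{semiring,finite} \<Rightarrow> 'm::{ab_semigroup_add,finite} \<Rightarrow> 'm" +
  assumes simple: "simple_semiring TYPE('r)"
    and card_R: "card (UNIV :: 'r set) > 2"
    and sub_irreducible: "sub_irreducible act"
begin

lemma not_quasitrivial: "\<not> quasitrivial act"
  using sub_irreducible unfolding sub_irreducible_def by blast

lemma act_injective: "act r = act s \<Longrightarrow> r = s"
  using act_inj[OF simple semimodule not_quasitrivial] by (rule injD)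

lemma proper_subsemimodule_fixed:
  assumes "subsemimodule act N" "N \<noteq> UNIV" "x \<in> N"
  shows "act r x = x"
  using sub_irreducible assms unfolding sub_irreducible_def id_quasitrivial_on_def by blast

lemma proper_orbit_fixed:
  assumes "range (\<lambda>r. act r y) \<noteq> UNIV"
  shows "act r (act s y) = act s y"
  using proper_subsemimodule_fixed[OF orbit_subsemimodule assms] by blast

lemma act_infty_eq_infty_if_orbit_UNIV:
  assumes "range (\<lambda>r. act r y) = UNIV"
  shows "act (infty::'r) y = infty"
proof -
  obtain t where "act t y = infty" using assms by (metis UNIV_I imageE)
  then show ?thesis by (rule act_infty_eq_infty_if_act_eq_infty)
qed

lemma exists_moved_point_with_act_infty:
  obtains y r where "act (infty::'r) y = infty" and "act r y \<noteq> y"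
proof -
  obtain r s :: 'r where rs: "r * s \<noteq> s"
    using exists_mult_neq_right[OF simple idem_R card_R] by blast
  then obtain y where y: "act (r * s) y \<noteq> act s y"
    using act_injective by blast
  then have "range (\<lambda>r. act r y) = UNIV"
    using proper_orbit_fixed[of y r s] by (auto simp: act_act)
  then have "act (infty::'r) y = infty" by (rule act_infty_eq_infty_if_orbit_UNIV)
  moreover have "act r y \<noteq> y \<or> act s y \<noteq> y" using y by (metis act_act)
  ultimately show ?thesis using that by blast
qed

text \<open>The down-set of \<open>\<infinity>\<^sub>R x\<close> under \<open>y \<mapsto> \<infinity>\<^sub>R y\<close> is a subsemimodule containing x.\<close>
lemma fixed_if_act_infty_neq:
  assumes "act (infty::'r) x \<noteq> infty"
  shows "act r x = x"
proof -
  let ?a = "act (infty::'r) x"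
  define N where "N = {y. act (infty::'r) y + ?a = ?a}"
  have "x \<in> N" unfolding N_def by simp
  moreover have "subsemimodule act N"
  proof (rule subsemimoduleI[OF \<open>x \<in> N\<close>])
    fix y w assume "y \<in> N" "w \<in> N"
    then have y: "act infty y + ?a = ?a" and w: "act infty w + ?a = ?a"
      unfolding N_def by simp_all
    have "act infty (y + w) + ?a = act infty y + (act infty w + ?a)"
      by (simp add: act_add_right add.assoc)
    also have "\<dots> = ?a" using y w by simp
    finally show "y + w \<in> N" unfolding N_def by simp
  next
    fix r y assume "y \<in> N"
    then have y: "act infty y + ?a = ?a" unfolding N_def by simp
    have "act infty (act r y) + ?a = act (infty * r) y + (act infty y + ?a)"
      using y by (simp add: act_act)
    also have "\<dots> = (act (infty * r) y + act infty y) + ?a" by (simp add: add.assoc)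
    also have "\<dots> = ?a" using y by (simp add: act_infty_mult_le)
    finally show "act r y \<in> N" unfolding N_def by simp
  qed
  moreover have "N \<noteq> UNIV"
  proof
    assume "N = UNIV"
    obtain y1 where "act (infty::'r) y1 = infty"
      using exists_moved_point_with_act_infty by blast
    moreover have "y1 \<in> N" using \<open>N = UNIV\<close> by simp
    ultimately have "infty + ?a = ?a" unfolding N_def by simp
    with assms show False by simp
  qed
  ultimately show ?thesis by (intro proper_subsemimodule_fixed)
qed

text \<open>If the up-set of a fixed point x is proper, it is fixed pointwise and contains
  every x + y.\<close>
lemma add_act_eq_if_fixed_not_neutral:
  assumes fixed: "\<And>r. act r x = x" and "\<not> additive_neutral x"
  shows "x + act r y = x + y"
proof -
  define Q where "Q = {y. x + y = y}"
  have "subsemimodule act Q"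
  proof (rule subsemimoduleI)
    show "x \<in> Q" unfolding Q_def by simp
  next
    fix y w assume "y \<in> Q"
    then have "x + y = y" unfolding Q_def by simp
    then have "x + (y + w) = y + w" by (simp only: add.assoc[symmetric])
    then show "y + w \<in> Q" unfolding Q_def by simp
  next
    fix r y assume "y \<in> Q"
    then have "x + y = y" unfolding Q_def by simp
    then have "act r x + act r y = act r y" by (simp only: act_add_right[symmetric])
    then show "act r y \<in> Q" unfolding Q_def fixed by simp
  qed
  moreover have "Q \<noteq> UNIV"
  proof
    assume "Q = UNIV"
    then have "x + y = y" for y unfolding Q_def by blast
    with assms(2) show False unfolding additive_neutral_def by (metis add.commute)
  qed
  moreover have "x + y \<in> Q" unfolding Q_def by (simp add: add.assoc[symmetric])
  ultimately have "act r (x + y) = x + y" by (rule proper_subsemimodule_fixed)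
  then show ?thesis by (simp add: act_add_right fixed)
qed

text \<open>Otherwise \<open>{y. x + y = \<infinity>}\<close> would be a proper subsemimodule containing a moved point.\<close>
lemma additive_neutral_if_fixed:
  assumes fixed: "\<And>r. act r x = x" and "x \<noteq> infty"
  shows "additive_neutral x"
proof (rule ccontr)
  assume not_neutral: "\<not> additive_neutral x"
  note shift = add_act_eq_if_fixed_not_neutral[OF fixed not_neutral]
  obtain y1 r1 where y1: "act (infty::'r) y1 = infty" "act r1 y1 \<noteq> y1"
    by (rule exists_moved_point_with_act_infty)
  define C where "C = {y. x + y = (infty::'m)}"
  have "subsemimodule act C"
  proof (rule subsemimoduleI)
    show "infty \<in> C" unfolding C_def by simp
  next
    fix y w assume "y \<in> C"
    then have "x + y = infty" unfolding C_def by simp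
    then have "x + (y + w) = infty" by (simp add: add.assoc[symmetric])
    then show "y + w \<in> C" unfolding C_def by simp
  next
    fix r y assume "y \<in> C"
    then show "act r y \<in> C" unfolding C_def by (simp add: shift)
  qed
  moreover have "x \<notin> C" using assms(2) unfolding C_def by simp
  then have "C \<noteq> UNIV" by blast
  moreover have "y1 \<in> C" unfolding C_def using shift[of infty y1] y1(1) by simp
  ultimately have "act r1 y1 = y1" by (rule proper_subsemimodule_fixed)
  with y1(2) show False ..
qed

lemma neutral_if_act_infty_neq:
  assumes "act (infty::'r) x \<noteq> infty"
  shows "additive_neutral x \<and> range (\<lambda>r. act r x) = {x}"
proof -
  have fixed: "\<And>r. act r x = x" using fixed_if_act_infty_neq[OF assms] .
  then have "x \<noteq> infty" using assms by metis
  with fixed have "additive_neutral x" by (rule additive_neutral_if_fixed)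
  moreover have "range (\<lambda>r. act r x) = {x}" using fixed by auto
  ultimately show ?thesis ..
qed

lemma right_absorbing_iff_infty_fixed:
  "(\<forall>s::'r. s * infty = infty) \<longleftrightarrow> range (\<lambda>r. act r (infty::'m)) = {infty}"
proof
  assume right_absorbing: "\<forall>s::'r. s * infty = infty"
  obtain y1 where y1: "act (infty::'r) y1 = infty"
    using exists_moved_point_with_act_infty by blast
  have "act r infty = infty" for r
    using act_act[of r infty y1] right_absorbing y1 by simp
  then show "range (\<lambda>r. act r (infty::'m)) = {infty}" by auto
next
  assume "range (\<lambda>r. act r (infty::'m)) = {infty}"
  then have infty_fixed: "act r (infty::'m) = infty" for r by auto
  have "act (s * infty) y = act infty y" for s :: 'r and y
  proof (cases "range (\<lambda>r. act r y) = UNIV")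
    case True
    then show ?thesis
      using act_infty_eq_infty_if_orbit_UNIV infty_fixed by (metis act_act)
  next
    case False
    then show ?thesis using proper_orbit_fixed by (metis act_act)
  qed
  then show "\<forall>s::'r. s * infty = infty" using act_injective by blast
qed

lemma exists_neutral_if_not_left_absorbing:
  assumes "\<not> (\<forall>s::'r. infty * s = infty)"
  shows "\<exists>z. additive_neutral z \<and> range (\<lambda>r. act r z) = {z}"
proof -
  have "\<exists>x. act (infty::'r) x \<noteq> infty"
  proof (rule ccontr)
    assume "\<not> ?thesis"
    then have "act (infty * s) = act infty" for s :: 'r by (auto simp: act_act[symmetric])
    with assms act_injective show False by blast
  qed
  then show ?thesis using neutral_if_act_infty_neq by blast
qed

text \<open>For left absorbing \<open>\<infinity>\<^sub>R\<close> the kernel of \<open>y \<mapsto> \<infinity>\<^sub>R y\<close> is a congruence, and it is not the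
  identity because \<open>\<infinity>\<^sub>R (r y) = \<infinity>\<^sub>R y\<close>.\<close>
lemma act_infty_eq_infty_if_left_absorbing:
  assumes left_absorbing: "\<forall>s::'r. infty * s = infty"
    and "quotient_irreducible act"
  shows "act (infty::'r) y = infty"
proof -
  let ?E = "{(y, y'). act (infty::'r) y = act infty y'}"
  have "semimodule_cong act ?E"
    unfolding semimodule_cong_def using equiv_kernel
    by (auto simp: act_add_right act_act left_absorbing)
  then have "?E = Id \<or> ?E = UNIV"
    using assms(2) unfolding quotient_irreducible_def by blast
  moreover have "?E \<noteq> Id"
  proof
    assume "?E = Id"
    then have "act r y = y" for r y
      using act_act[of infty r y] left_absorbing by (auto simp: set_eq_iff)
    then show False using not_quasitrivial unfolding quasitrivial_def by simp
  qed
  ultimately have "?E = UNIV" by blast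
  obtain y1 where y1: "act (infty::'r) y1 = infty"
    using exists_moved_point_with_act_infty by blast
  have "(y, y1) \<in> ?E" using \<open>?E = UNIV\<close> by blast
  then have "act (infty::'r) y = act infty y1" by simp
  then show ?thesis using y1 by (rule trans)
qed

text \<open>If Rz were proper, the kernel of \<open>r \<mapsto> r z\<close> would be a semiring congruence; it cannot
  be the identity (the multiplication is not the right projection), so \<open>R z = {\<infinity>\<^sub>M}\<close>, and
  \<open>r y = r (y + z) = \<infinity>\<^sub>M\<close> for all r, y.\<close>
lemma orbit_of_neutral_eq_UNIV:
  assumes left_absorbing: "\<forall>s::'r. infty * s = infty"
    and "quotient_irreducible act"
    and neutral: "additive_neutral z"
  shows "range (\<lambda>r. act r z) = UNIV"
proof (rule ccontr)
  assume "range (\<lambda>r. act r z) \<noteq> UNIV"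
  note orbit_fixed = proper_orbit_fixed[OF this]
  have "inj (\<lambda>r. act r z) \<or> (\<forall>r s. act r z = act s z)"
    by (rule simple_semiring_kernel_cases[OF simple])
      (metis act_add_left act_act orbit_fixed)
  moreover have "\<not> inj (\<lambda>r. act r z)"
    using exists_mult_neq_right[OF simple idem_R card_R] orbit_fixed
    by (auto simp: inj_def act_act)
  ultimately have "act r z = act infty z" for r by blast
  then have "act r z = infty" for r
    using act_infty_eq_infty_if_left_absorbing[OF assms(1,2)] by simp
  then have "act r y = infty" for r y
    using act_add_right[of r y z] neutral unfolding additive_neutral_def by simp
  then show False using not_quasitrivial unfolding quasitrivial_def by simp
qed

end

theorem proposition2p22:
  fixes act :: "'r::{semiring, finite} \<Rightarrow> 'm::{ab_semigroup_add, finite} \<Rightarrow> 'm"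
  assumes "simple_semiring TYPE('r)"
    and "add_idem TYPE('r)"
    and "card (UNIV :: 'r set) > 2"
    and "semimodule act"
    and "add_idem TYPE('m)"
    and "sub_irreducible act"
  shows
    "(\<forall>x. act (infty :: 'r) x \<noteq> (infty :: 'm) \<longrightarrow>
        (\<exists>z. additive_neutral z \<and> x = z \<and> range (\<lambda>r. act r z) = {z}))
     \<and> ((\<forall>s::'r. s * infty = infty) \<longleftrightarrow> range (\<lambda>r. act r (infty :: 'm)) = {infty})
     \<and> (\<not> (\<forall>s::'r. infty * s = infty) \<longrightarrow>
          (\<exists>z. additive_neutral z \<and> range (\<lambda>r. act r z) = {z}))
     \<and> (\<forall>z. (\<forall>s::'r. infty * s = infty) \<and> quotient_irreducible act \<and> card (UNIV :: 'm set) > 2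
          \<and> additive_neutral z \<longrightarrow> range (\<lambda>r. act r z) = UNIV)"
proof -
  interpret sub_irreducible_semimodule act
    using assms by unfold_locales
  show ?thesis
    using neutral_if_act_infty_neq right_absorbing_iff_infty_fixed
      exists_neutral_if_not_left_absorbing orbit_of_neutral_eq_UNIV
    by blast
qed

end
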